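(* Let $N\ge 1$ and let $L_1,\dots,L_N$ and $K_1,\dots,K_N$ be positive integers with $K_n\le L_n$ for all $n$. Among all TTM-trees for these parameters (as defined in the context), there exists one of minimum cost that is binary, i.e., in which every node has at most two children.
   Context: A TTM-tree is a finite rooted tree with a labelling satisfying: (i) the root carries the special label "input tensor"; (ii) there are exactly $N$ leaves, and the leaves are labelled bijectively by $\{1,\dots,N\}$ (leaf labelled $n$ stands for the new factor matrix of mode $n$); (iii) every internal node (a node that is neither the root nor a leaf) is labelled by a mode in $\{1,\dots,N\}$; (iv) for each leaf labelled $n$, the path from the root to that leaf contains exactly $N-1$ internal nodes, and every mode other than $n$ appears as a label on that path. Cost: define a cardinality $c(\cdot)$ top-down by $c(\text{root})=\prod_{j=1}^N L_j$, and for an internal node $u$ with label $n$ and parent $v$, $c(u)=(K_n/L_n)\,c(v)$; the cost of such an internal node is $K_n\,c(v)$. Leaves and the root have cost $0$. The cost of the tree is the sum of the costs of its internal nodes. (This models the number of floating-point operations of computing, for each mode $n$, the product of an $L_1\times\cdots\times L_N$ tensor with the transposed $L_j\times K_j$ factor matrices along all modes $j\neq n$, reusing intermediate results along shared tree paths.) *)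

theory Defs
  imports Complex_Main "HOL-Library.Multiset"
begin

text \<open>A node of a TTM-tree below the root: a node with no children is a leaf
  (its label is the mode n of the new factor matrix it stands for); a node with
  children is an internal node labelled by a mode. The root itself (labelled
  "input tensor") is represented implicitly: a TTM-tree is the list of the
  subtrees hanging from the root.\<close>
datatype tnode = Nd nat "tnode list"

fun leaf_paths :: "tnode \<Rightarrow> (nat list \<times> nat) list" where
  "leaf_paths (Nd n []) = [([], n)]"
| "leaf_paths (Nd m (t # ts)) =
     map (\<lambda>(p, l). (m # p, l)) (concat (map leaf_paths (t # ts)))"

definition root_paths :: "tnode list \<Rightarrow> (nat list \<times> nat) list" where
  "root_paths ts = concat (map leaf_paths ts)"

definition is_ttm_tree :: "nat \<Rightarrow> tnode list \<Rightarrow> bool" where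
  "is_ttm_tree N ts \<longleftrightarrow>
     \<comment> \<open>leaves labelled bijectively by 1..N\<close>
     mset (map snd (root_paths ts)) = mset [1..<N+1] \<and>
     \<comment> \<open>internal nodes labelled by modes; path conditions\<close>
     (\<forall>(p, l) \<in> set (root_paths ts).
        set p \<subseteq> {1..N} \<and> length p = N - 1 \<and> {1..N} - {l} \<subseteq> set p)"

text \<open>Cost of the subtree rooted at an internal node/leaf, given the cardinality
  c of its parent.\<close>
fun node_cost :: "(nat \<Rightarrow> nat) \<Rightarrow> (nat \<Rightarrow> nat) \<Rightarrow> real \<Rightarrow> tnode \<Rightarrow> real" where
  "node_cost K L c (Nd n []) = 0"
| "node_cost K L c (Nd n (t # ts)) =
     real (K n) * c +
     sum_list (map (node_cost K L (real (K n) / real (L n) * c)) (t # ts))"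

definition ttm_cost :: "nat \<Rightarrow> (nat \<Rightarrow> nat) \<Rightarrow> (nat \<Rightarrow> nat) \<Rightarrow> tnode list \<Rightarrow> real" where
  "ttm_cost N K L ts =
     sum_list (map (node_cost K L (\<Prod>j\<in>{1..N}. real (L j))) ts)"

fun binary_node :: "tnode \<Rightarrow> bool" where
  "binary_node (Nd n ts) \<longleftrightarrow> length ts \<le> 2 \<and> list_all binary_node ts"

definition binary_ttm :: "tnode list \<Rightarrow> bool" where
  "binary_ttm ts \<longleftrightarrow> length ts \<le> 2 \<and> list_all binary_node ts"

end

(*
  Every root-to-leaf path of a TTM-tree carries each mode other than its leaf exactly once, and
  every subtree does the same for the modes not used above it. If a node has three or more
  subtrees, let x be one of them, with root label a. The leaf labelled a lies in at most one of
  the others, so some other subtree w has an a-node on every path. Contract these a-nodes in w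
  and hang the result below x. All paths stay valid and the cost does not increase: the
  contracted a-nodes disappear, and every remaining node of w now meets the factor K_a/L_a <= 1
  no later than before, so its cardinality does not grow. Since each such merge removes nodes,
  repeating it at the root and recursively in all subtrees makes any TTM-tree binary without
  increasing its cost; as there are only finitely many binary TTM-trees, one of them is
  cheapest among all TTM-trees.
*)

theory Submission
  imports Defs
begin

definition forest_cost :: "(nat \<Rightarrow> nat) \<Rightarrow> (nat \<Rightarrow> nat) \<Rightarrow> real \<Rightarrow> tnode list \<Rightarrow> real" where
  "forest_cost K L c F = sum_list (map (node_cost K L c) F)"

definition leaf_labels :: "tnode list \<Rightarrow> nat list" where
  "leaf_labels F = map snd (root_paths F)"

fun tree_size :: "tnode \<Rightarrow> nat" where
  "tree_size (Nd n ts) = Suc (sum_list (map tree_size ts))"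

definition forest_size :: "tnode list \<Rightarrow> nat" where
  "forest_size F = sum_list (map tree_size F)"

lemma root_paths_Nil [simp]: "root_paths [] = []"
  and root_paths_Cons [simp]: "root_paths (t # F) = leaf_paths t @ root_paths F"
  and root_paths_append [simp]: "root_paths (F @ G) = root_paths F @ root_paths G"
  by (simp_all add: root_paths_def)

lemma leaf_paths_node:
  "cs \<noteq> [] \<Longrightarrow> leaf_paths (Nd m cs) = map (\<lambda>(p, l). (m # p, l)) (root_paths cs)"
  by (cases cs) (auto simp: root_paths_def)

lemma leaf_paths_ne: "leaf_paths t \<noteq> []"
  by (induction t rule: leaf_paths.induct) auto

lemma root_paths_ne: "F \<noteq> [] \<Longrightarrow> root_paths F \<noteq> []"
  by (cases F) (auto simp: leaf_paths_ne)

lemma leaf_paths_child: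
  "c \<in> set cs \<Longrightarrow> (p, l) \<in> set (leaf_paths c) \<Longrightarrow> (m # p, l) \<in> set (leaf_paths (Nd m cs))"
  by (cases "cs = []") (force simp: leaf_paths_node root_paths_def)+

lemma leaf_labels_simps [simp]:
  "leaf_labels [] = []"
  "leaf_labels (t # F) = map snd (leaf_paths t) @ leaf_labels F"
  "leaf_labels (F @ G) = leaf_labels F @ leaf_labels G"
  by (simp_all add: leaf_labels_def)

lemma leaf_labels_node: "cs \<noteq> [] \<Longrightarrow> map snd (leaf_paths (Nd m cs)) = leaf_labels cs"
  by (simp add: leaf_labels_def leaf_paths_node case_prod_beta)

lemma distinct_leaf_labels_root:
  "distinct (leaf_labels F) \<Longrightarrow> t \<in> set F \<Longrightarrow> distinct (leaf_labels [t])"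
  by (induction F) auto

lemma forest_cost_simps [simp]:
  "forest_cost K L c [] = 0"
  "forest_cost K L c (t # F) = node_cost K L c t + forest_cost K L c F"
  "forest_cost K L c (F @ G) = forest_cost K L c F + forest_cost K L c G"
  by (simp_all add: forest_cost_def)

lemma forest_cost_concat:
  "forest_cost K L c (concat Fs) = sum_list (map (forest_cost K L c) Fs)"
  by (induction Fs) auto

lemma node_cost_node:
  "cs \<noteq> [] \<Longrightarrow> node_cost K L c (Nd m cs) = K m * c + forest_cost K L (K m / L m * c) cs"
  by (cases cs) (auto simp: forest_cost_def)

lemma forest_size_simps [simp]:
  "forest_size [] = 0"
  "forest_size (t # F) = tree_size t + forest_size F"
  "forest_size (F @ G) = forest_size F + forest_size G"
  by (simp_all add: forest_size_def)

lemma forest_size_concat: "forest_size (concat Fs) = sum_list (map forest_size Fs)"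
  by (induction Fs) auto

lemma tree_size_node: "tree_size (Nd m cs) = Suc (forest_size cs)"
  by (simp add: forest_size_def)

declare tree_size.simps [simp del]

(* The invariant of a subtree whose ancestors carry exactly the modes outside A. *)
definition uniform_paths :: "nat set \<Rightarrow> tnode list \<Rightarrow> bool" where
  "uniform_paths A F \<longleftrightarrow> (\<forall>(p, l) \<in> set (root_paths F). distinct (l # p) \<and> set (l # p) = A)"

lemma uniform_paths_Nil [simp]: "uniform_paths A []"
  by (simp add: uniform_paths_def)

lemma uniform_paths_append:
  "uniform_paths A (F @ G) \<longleftrightarrow> uniform_paths A F \<and> uniform_paths A G"
  by (simp only: uniform_paths_def root_paths_append set_append ball_Un)

lemma uniform_paths_Cons: "uniform_paths A (t # F) \<longleftrightarrow> uniform_paths A [t] \<and> uniform_paths A F"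
  using uniform_paths_append[of A "[t]" F] by simp

lemma uniform_paths_root:
  assumes "uniform_paths A F" "t \<in> set F"
  shows "uniform_paths A [t]"
  unfolding uniform_paths_def
proof
  fix x assume "x \<in> set (root_paths [t])"
  then have "x \<in> set (root_paths F)"
    using assms(2) by (auto simp: root_paths_def)
  from bspec[OF assms(1)[unfolded uniform_paths_def] this]
  show "case x of (p, l) \<Rightarrow> distinct (l # p) \<and> set (l # p) = A" .
qed

lemma uniform_paths_node:
  assumes "cs \<noteq> []"
  shows "uniform_paths A [Nd m cs] \<longleftrightarrow> m \<in> A \<and> uniform_paths (A - {m}) cs"
proof -
  obtain p l where "(p, l) \<in> set (root_paths cs)"
    using root_paths_ne[OF assms] by (metis list.set_sel(1) surj_pair)
  then show ?thesis
    using assms by (fastforce simp: uniform_paths_def leaf_paths_node)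
qed

section \<open>Contracting the nodes of one mode\<close>

fun contract :: "nat \<Rightarrow> tnode \<Rightarrow> tnode list" where
  "contract a (Nd m []) = [Nd m []]"
| "contract a (Nd m (t # ts)) =
     (if m = a then concat (map (contract a) (t # ts))
      else [Nd m (concat (map (contract a) (t # ts)))])"

lemma contract_node:
  "cs \<noteq> [] \<Longrightarrow> contract a (Nd m cs) =
     (if m = a then concat (map (contract a) cs) else [Nd m (concat (map (contract a) cs))])"
  by (cases cs) simp_all

lemma contract_ne: "contract a t \<noteq> []"
  by (induction t rule: contract.induct) auto

lemma concat_map_contract_ne: "cs \<noteq> [] \<Longrightarrow> concat (map (contract a) cs) \<noteq> []"
  by (cases cs) (simp_all add: contract_ne)

lemma root_paths_contract:
  "root_paths (contract a t) = map (\<lambda>(p, l). (filter (\<lambda>x. x \<noteq> a) p, l)) (leaf_paths t)"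
proof (induction t)
  case (Nd m cs)
  show ?case
  proof (cases "cs = []")
    case False
    have "root_paths (concat (map (contract a) cs)) =
        map (\<lambda>(p, l). (filter (\<lambda>x. x \<noteq> a) p, l)) (root_paths cs)"
      using Nd.IH by (induction cs) auto
    then show ?thesis
      using False concat_map_contract_ne[OF False]
      by (auto simp: contract_node leaf_paths_node case_prod_beta)
  qed simp
qed

lemma leaf_labels_contract: "leaf_labels (contract a t) = leaf_labels [t]"
  by (simp add: leaf_labels_def root_paths_contract case_prod_beta)

lemma contract_id:
  "\<forall>(p, l) \<in> set (leaf_paths t). a \<notin> set p \<Longrightarrow> contract a t = [t]"
proof (induction t)
  case (Nd m cs)
  show ?case
  proof (cases "cs = []")
    case False
    obtain p l where "(p, l) \<in> set (root_paths cs)"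
      using root_paths_ne[OF False] by (metis list.set_sel(1) surj_pair)
    then have "m \<noteq> a"
      using Nd.prems False by (auto simp: leaf_paths_node)
    moreover have "contract a c = [c]" if "c \<in> set cs" for c
      using Nd.IH[OF that] Nd.prems leaf_paths_child[OF that] by fastforce
    ultimately show ?thesis
      using False by (simp add: contract_node map_idI cong: map_cong)
  qed simp
qed

lemma uniform_paths_contract:
  assumes "uniform_paths A [t]" "a \<notin> set (leaf_labels [t])"
  shows "uniform_paths (A - {a}) (contract a t)"
proof -
  have "distinct (l # filter (\<lambda>x. x \<noteq> a) p) \<and> set (l # filter (\<lambda>x. x \<noteq> a) p) = A - {a}"
    if "(p, l) \<in> set (leaf_paths t)" for p l
  proof -
    have "distinct (l # p)" "set (l # p) = A" "l \<noteq> a"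
      using assms that by (force simp: uniform_paths_def leaf_labels_def)+
    then show ?thesis by auto
  qed
  then show ?thesis
    by (fastforce simp: uniform_paths_def root_paths_contract simp del: list.set distinct.simps)
qed

lemma forest_size_contract_le: "forest_size (contract a t) \<le> tree_size t"
proof (induction t)
  case (Nd m cs)
  have "sum_list (map (\<lambda>c. forest_size (contract a c)) cs) \<le> forest_size cs"
    using Nd.IH by (simp add: forest_size_def sum_list_mono)
  then show ?case
    by (cases "cs = []") (simp_all add: contract_node forest_size_concat tree_size_node o_def)
qed

lemma forest_size_contract_less:
  "\<forall>(p, l) \<in> set (leaf_paths t). a \<in> set p \<Longrightarrow> forest_size (contract a t) < tree_size t"
proof (induction t)
  case (Nd m cs)
  show ?case
  proof (cases cs)
    case (Cons c cs')
    have rest: "sum_list (map (\<lambda>c. forest_size (contract a c)) cs') \<le> forest_size cs'"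
      unfolding forest_size_def[of cs'] by (intro sum_list_mono forest_size_contract_le)
    show ?thesis
    proof (cases "m = a")
      case True
      then show ?thesis
        using Cons rest forest_size_contract_le[of a c]
        by (simp add: forest_size_concat tree_size_node o_def)
    next
      case False
      have "forest_size (contract a c) < tree_size c"
        using Nd.IH[of c] Nd.prems False leaf_paths_child[of c cs _ _ m] Cons by fastforce
      then show ?thesis
        using False Cons rest by (simp add: forest_size_concat tree_size_node o_def)
    qed
  qed (use Nd.prems in simp)
qed

lemma contract_root:
  assumes "cs \<noteq> []" "\<forall>(p, l) \<in> set (leaf_paths (Nd a cs)). distinct p"
  shows "contract a (Nd a cs) = cs"
proof -
  have "contract a x = [x]" if "x \<in> set cs" for x
    using contract_id assms(2) leaf_paths_child[OF that] by fastforce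
  then show ?thesis
    using assms(1) by (simp add: contract_node map_idI cong: map_cong)
qed

lemma ratio_mult_le: "K a \<le> L a \<Longrightarrow> 0 \<le> c \<Longrightarrow> real (K a) / real (L a) * c \<le> c"
  by (intro mult_left_le_one_le) (auto simp: divide_le_eq_1)

lemma forest_cost_contract:
  assumes "\<forall>(p, l) \<in> set (leaf_paths t). distinct p" "K a \<le> L a" "0 \<le> c"
  shows "forest_cost K L (K a / L a * c) (contract a t) \<le> node_cost K L c t"
  using assms(1,3)
proof (induction t arbitrary: c)
  case (Nd m cs)
  let ?r = "real (K a) / real (L a)" and ?q = "real (K m) / real (L m)"
  show ?case
  proof (cases "cs = []")
    case ne: False
    show ?thesis
    proof (cases "m = a")
      case True
      then show ?thesis
        using ne Nd.prems contract_root[OF ne] by (simp add: node_cost_node)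
    next
      case False
      have "0 \<le> ?q * c"
        using Nd.prems(2) by simp
      then have "forest_cost K L (?r * (?q * c)) (contract a x) \<le> node_cost K L (?q * c) x"
        if "x \<in> set cs" for x
        using Nd.IH[OF that] Nd.prems(1) leaf_paths_child[OF that] by fastforce
      then have "forest_cost K L (?r * (?q * c)) (concat (map (contract a) cs))
          \<le> forest_cost K L (?q * c) cs"
        unfolding forest_cost_concat forest_cost_def[of K L "?q * c" cs] map_map o_def
        by (rule sum_list_mono)
      then have "forest_cost K L (?q * (?r * c)) (concat (map (contract a) cs))
          \<le> forest_cost K L (?q * c) cs"
        by (simp only: mult.left_commute[of ?q ?r c])
      moreover have "K m * (?r * c) \<le> K m * c"
        using ratio_mult_le[where K = K and L = L and a = a, OF assms(2) Nd.prems(2)] by (rule mult_left_mono) simp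
      ultimately show ?thesis
        using ne False concat_map_contract_ne[OF ne]
        by (simp add: contract_node node_cost_node)
    qed
  qed simp
qed

section \<open>Binarization\<close>

definition improves ::
  "(nat \<Rightarrow> nat) \<Rightarrow> (nat \<Rightarrow> nat) \<Rightarrow> nat set \<Rightarrow> tnode list \<Rightarrow> tnode list \<Rightarrow> bool" where
  "improves K L A F' F \<longleftrightarrow>
     uniform_paths A F' \<and> mset (leaf_labels F') = mset (leaf_labels F) \<and>
     (\<forall>c \<ge> 0. forest_cost K L c F' \<le> forest_cost K L c F)"

lemma improves_refl: "uniform_paths A F \<Longrightarrow> improves K L A F F"
  by (simp add: improves_def)

lemma improves_trans:
  "improves K L A F'' F' \<Longrightarrow> improves K L A F' F \<Longrightarrow> improves K L A F'' F"
  by (fastforce simp: improves_def)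

lemma improves_Cons:
  "improves K L A [t'] [t] \<Longrightarrow> improves K L A F' F \<Longrightarrow> improves K L A (t' # F') (t # F)"
  by (fastforce simp: improves_def uniform_paths_Cons[of A t' F'] intro: add_mono)

lemma improves_swap:
  "improves K L A F' (x # z # y # G) \<Longrightarrow> improves K L A F' (x # y # z # G)"
  by (simp add: improves_def ac_simps)

lemma improves_node:
  assumes "cs \<noteq> []" "m \<in> A" "improves K L (A - {m}) cs' cs"
  shows "improves K L A [Nd m cs'] [Nd m cs]"
proof -
  have "cs' \<noteq> []"
    using assms(1,3) root_paths_ne[of cs] by (auto simp: improves_def leaf_labels_def)
  moreover have "forest_cost K L c cs' \<le> forest_cost K L c cs" if "0 \<le> c" for c
    using assms(3) that by (simp add: improves_def)
  ultimately show ?thesis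
    using assms by (simp add: improves_def uniform_paths_node leaf_labels_node node_cost_node)
qed

lemma improves_distinct:
  assumes "improves K L A F' F" "distinct (leaf_labels F)"
  shows "distinct (leaf_labels F')"
proof -
  have "mset (leaf_labels F') = mset (leaf_labels F)"
    using assms(1) by (simp add: improves_def)
  then show ?thesis
    using assms(2) mset_eq_imp_distinct_iff by blast
qed

lemma improves_roots:
  assumes "\<forall>t \<in> set F. \<exists>t'. P t' \<and> improves K L A [t'] [t]"
  shows "\<exists>F'. length F' = length F \<and> list_all P F' \<and> improves K L A F' F"
  using assms
proof (induction F)
  case Nil
  then show ?case by (simp add: improves_refl)
next
  case (Cons t F)
  then obtain t' F' where "P t'" "improves K L A [t'] [t]"
    "length F' = length F" "list_all P F'" "improves K L A F' F"
    by auto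
  then show ?case
    by (intro exI[of _ "t' # F'"]) (simp add: improves_Cons)
qed

lemma improves_merge:
  assumes u: "uniform_paths A (Nd a X # w # G)" and "X \<noteq> []"
    and a: "a \<notin> set (leaf_labels [w])" "K a \<le> L a"
  shows "improves K L A (Nd a (X @ contract a w) # G) (Nd a X # w # G)"
    and "forest_size (Nd a (X @ contract a w) # G) < forest_size (Nd a X # w # G)"
proof -
  have uX: "a \<in> A" "uniform_paths (A - {a}) X" and uw: "uniform_paths A [w]"
    and uG: "uniform_paths A G"
    using u \<open>X \<noteq> []\<close>
    by (simp_all add: uniform_paths_Cons[of A "Nd a X" "w # G"] uniform_paths_Cons[of A w G]
        uniform_paths_node)
  have paths_w: "a \<in> set p \<and> distinct p" if "(p, l) \<in> set (leaf_paths w)" for p l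
    using uw a(1) uX(1) that by (force simp: uniform_paths_def leaf_labels_def)
  have ne: "X @ contract a w \<noteq> []"
    using \<open>X \<noteq> []\<close> by simp
  have "uniform_paths A [Nd a (X @ contract a w)]"
    using uX uniform_paths_contract[OF uw a(1)] ne
    by (simp add: uniform_paths_node uniform_paths_append)
  moreover have "forest_cost K L (K a / L a * c) (contract a w) \<le> node_cost K L c w"
    if "0 \<le> c" for c
    using paths_w a(2) that by (intro forest_cost_contract) auto
  ultimately show "improves K L A (Nd a (X @ contract a w) # G) (Nd a X # w # G)"
    using uG ne \<open>X \<noteq> []\<close>
    by (simp add: improves_def uniform_paths_Cons[of A _ G] leaf_labels_node leaf_labels_contract
        node_cost_node)
  have "forest_size (contract a w) < tree_size w"
    using paths_w by (intro forest_size_contract_less) auto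
  then show "forest_size (Nd a (X @ contract a w) # G) < forest_size (Nd a X # w # G)"
    by (simp add: tree_size_node)
qed

lemma leaf_root_alone:
  assumes "uniform_paths A (Nd a [] # F)" "distinct (leaf_labels (Nd a [] # F))"
  shows "F = []"
proof (rule ccontr)
  assume "F \<noteq> []"
  then obtain p l where pl: "(p, l) \<in> set (root_paths F)"
    using root_paths_ne by (metis list.set_sel(1) surj_pair)
  have "A = {a}" and "distinct (l # p)" "set (l # p) = A"
    using assms(1) pl by (auto simp: uniform_paths_def)
  then have "l = a" by auto
  then show False
    using assms(2) pl by (force simp: leaf_labels_def)
qed

lemma merge_step:
  assumes u: "uniform_paths A F" and d: "distinct (leaf_labels F)"
    and K: "\<forall>a \<in> A. K a \<le> L a" and "2 < length F"
  shows "\<exists>F'. forest_size F' < forest_size F \<and> improves K L A F' F"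
proof -
  obtain x y z G where "F = x # y # z # G"
    using \<open>2 < length F\<close> by (metis Suc_le_length_iff Suc_leI numeral_2_eq_2)
  moreover obtain a X where "x = Nd a X"
    by (cases x)
  ultimately have F: "F = Nd a X # y # z # G"
    by simp
  have "X \<noteq> []"
    using leaf_root_alone[of A a "y # z # G"] u d F by auto
  then have "a \<in> A"
    using u F by (simp add: uniform_paths_Cons[of A "Nd a X" "y # z # G"] uniform_paths_node)
  have "a \<notin> set (leaf_labels [y]) \<or> a \<notin> set (leaf_labels [z])"
    using d F by auto
  then show ?thesis
  proof
    assume "a \<notin> set (leaf_labels [y])"
    then show ?thesis
      using improves_merge[of A a X y "z # G"] u F \<open>X \<noteq> []\<close> \<open>a \<in> A\<close> K by blast
  next
    assume "a \<notin> set (leaf_labels [z])"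
    moreover have "uniform_paths A (Nd a X # z # y # G)"
      using u F by (simp add: uniform_paths_Cons[of A _ "_ # _"] uniform_paths_Cons[of A _ G])
    ultimately have "forest_size (Nd a (X @ contract a z) # y # G) < forest_size F"
      "improves K L A (Nd a (X @ contract a z) # y # G) F"
      using improves_merge[of A a X z "y # G"] improves_swap F \<open>X \<noteq> []\<close> \<open>a \<in> A\<close> K by auto
    then show ?thesis
      by blast
  qed
qed

lemma root_children:
  assumes "uniform_paths A F" "distinct (leaf_labels F)" "Nd m cs \<in> set F" "cs \<noteq> []"
  shows "forest_size cs < forest_size F" "m \<in> A" "uniform_paths (A - {m}) cs"
    "distinct (leaf_labels cs)"
proof -
  have "tree_size (Nd m cs) \<le> forest_size F"
    unfolding forest_size_def using assms(3) by (simp add: member_le_sum_list)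
  then show "forest_size cs < forest_size F"
    by (simp add: tree_size_node)
  show "m \<in> A" "uniform_paths (A - {m}) cs"
    using uniform_paths_root[OF assms(1,3)] assms(4) by (simp_all add: uniform_paths_node)
  show "distinct (leaf_labels cs)"
    using distinct_leaf_labels_root[OF assms(2,3)] assms(4) by (simp add: leaf_labels_node)
qed

lemma binarize_forest:
  assumes "uniform_paths A F" "distinct (leaf_labels F)" "\<forall>a \<in> A. K a \<le> L a"
  shows "\<exists>F'. length F' \<le> 2 \<and> list_all binary_node F' \<and> improves K L A F' F"
  using assms
proof (induction "forest_size F" arbitrary: A F rule: less_induct)
  case less
  show ?case
  proof (cases "length F \<le> 2")
    case False
    then obtain F1 where F1: "forest_size F1 < forest_size F" "improves K L A F1 F"
      using merge_step[OF less.prems] by auto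
    have "uniform_paths A F1" "distinct (leaf_labels F1)"
      using F1(2) improves_distinct[OF F1(2) less.prems(2)] by (simp_all add: improves_def)
    then obtain F2 where "length F2 \<le> 2" "list_all binary_node F2" "improves K L A F2 F1"
      using less.hyps[OF F1(1) _ _ less.prems(3)] by blast
    then show ?thesis
      using improves_trans[OF _ F1(2)] by blast
  next
    case True
    have "\<exists>t'. binary_node t' \<and> improves K L A [t'] [t]" if t: "t \<in> set F" for t
    proof (cases t)
      case (Nd m cs)
      show ?thesis
      proof (cases "cs = []")
        case True
        then show ?thesis
          using Nd improves_refl[OF uniform_paths_root[OF less.prems(1) t]]
          by (intro exI[of _ t]) simp
      next
        case False
        note children = root_children[OF less.prems(1,2) t[unfolded Nd] False]
        have "\<forall>a \<in> A - {m}. K a \<le> L a"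
          using less.prems(3) by simp
        then obtain cs' where "length cs' \<le> 2" "list_all binary_node cs'"
          "improves K L (A - {m}) cs' cs"
          using less.hyps[OF children(1,3,4)] by blast
        then show ?thesis
          using Nd improves_node[OF False children(2)] by (intro exI[of _ "Nd m cs'"]) simp
      qed
    qed
    then obtain F' where "length F' = length F" "list_all binary_node F'" "improves K L A F' F"
      using improves_roots[of F binary_node K L A] by blast
    with True show ?thesis
      by (intro exI[of _ F']) simp
  qed
qed

section \<open>TTM-trees\<close>

lemma is_ttm_tree_iff:
  "is_ttm_tree N F \<longleftrightarrow> uniform_paths {1..N} F \<and> mset (leaf_labels F) = mset [1..<N+1]"
proof -
  have path_iff: "(set p \<subseteq> {1..N} \<and> length p = N - 1 \<and> {1..N} - {l} \<subseteq> set p) \<longleftrightarrow>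
      (distinct (l # p) \<and> set (l # p) = {1..N})" if l: "l \<in> {1..N}" for p l
  proof
    assume h: "set p \<subseteq> {1..N} \<and> length p = N - 1 \<and> {1..N} - {l} \<subseteq> set p"
    then have "set (l # p) = {1..N}"
      using l by auto
    moreover from this have "card (set (l # p)) = length (l # p)"
      using h l by simp
    ultimately show "distinct (l # p) \<and> set (l # p) = {1..N}"
      using card_distinct by blast
  next
    assume h: "distinct (l # p) \<and> set (l # p) = {1..N}"
    then have "length (l # p) = N"
      using distinct_card[of "l # p"] by simp
    then show "set p \<subseteq> {1..N} \<and> length p = N - 1 \<and> {1..N} - {l} \<subseteq> set p"
      using h by auto
  qed
  have label_range: "l \<in> {1..N}"
    if "(p, l) \<in> set (root_paths F)" "mset (leaf_labels F) = mset [1..<N+1] \<or> uniform_paths {1..N} F"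
    for p l
    using that(2)
  proof
    assume labels: "mset (leaf_labels F) = mset [1..<N+1]"
    have "l \<in> set (leaf_labels F)"
      using that(1) by (force simp: leaf_labels_def)
    then have "l \<in> set [1..<N+1]"
      using mset_eq_setD[OF labels] by blast
    then show ?thesis
      by (simp del: upt_Suc)
  next
    assume "uniform_paths {1..N} F"
    then show ?thesis
      using that(1) by (force simp: uniform_paths_def)
  qed
  show ?thesis
  proof (intro iffI conjI)
    assume h: "is_ttm_tree N F"
    then show labels: "mset (leaf_labels F) = mset [1..<N+1]"
      by (simp add: is_ttm_tree_def leaf_labels_def)
    show "uniform_paths {1..N} F"
      unfolding uniform_paths_def
    proof (intro ballI, clarify)
      fix p l assume pl: "(p, l) \<in> set (root_paths F)"
      from bspec[OF conjunct2[OF h[unfolded is_ttm_tree_def]] pl]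
      show "distinct (l # p) \<and> set (l # p) = {1..N}"
        using path_iff[OF label_range[OF pl]] labels by simp
    qed
  next
    assume h: "uniform_paths {1..N} F \<and> mset (leaf_labels F) = mset [1..<N+1]"
    have "set p \<subseteq> {1..N} \<and> length p = N - 1 \<and> {1..N} - {l} \<subseteq> set p"
      if pl: "(p, l) \<in> set (root_paths F)" for p l
      using bspec[OF h[THEN conjunct1, unfolded uniform_paths_def] pl]
        path_iff[OF label_range[OF pl]] h by simp
    then show "is_ttm_tree N F"
      using h unfolding is_ttm_tree_def leaf_labels_def by blast
  qed
qed

fun chain :: "nat list \<Rightarrow> nat \<Rightarrow> tnode" where
  "chain [] n = Nd n []"
| "chain (m # ms) n = Nd m [chain ms n]"

lemma leaf_paths_chain: "leaf_paths (chain p n) = [(p, n)]"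
  by (induction p) auto

lemma root_paths_chains: "root_paths (map (\<lambda>n. chain (f n) n) ns) = map (\<lambda>n. (f n, n)) ns"
  by (induction ns) (simp_all add: leaf_paths_chain)

lemma ttm_tree_exists: "\<exists>F. is_ttm_tree N F"
proof -
  let ?F = "map (\<lambda>n. chain (filter (\<lambda>m. m \<noteq> n) [1..<N+1]) n) [1..<N+1]"
  have "is_ttm_tree N ?F"
    by (auto simp: is_ttm_tree_iff uniform_paths_def leaf_labels_def root_paths_chains o_def)
  then show ?thesis ..
qed

fun bounded_tree :: "nat \<Rightarrow> nat \<Rightarrow> tnode \<Rightarrow> bool" where
  "bounded_tree N 0 t \<longleftrightarrow> False"
| "bounded_tree N (Suc d) (Nd n cs) \<longleftrightarrow>
     n \<le> N \<and> length cs \<le> 2 \<and> (\<forall>c \<in> set cs. bounded_tree N d c)"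

lemma finite_bounded_trees: "finite {t. bounded_tree N d t}"
proof (induction d)
  case (Suc d)
  let ?C = "{cs. set cs \<subseteq> {t. bounded_tree N d t} \<and> length cs \<le> 2}"
  have "{t. bounded_tree N (Suc d) t} \<subseteq> (\<lambda>(n, cs). Nd n cs) ` ({..N} \<times> ?C)"
  proof
    fix t assume "t \<in> {t. bounded_tree N (Suc d) t}"
    then show "t \<in> (\<lambda>(n, cs). Nd n cs) ` ({..N} \<times> ?C)"
      by (cases t) force
  qed
  moreover have "finite ({..N} \<times> ?C)"
    using finite_lists_length_le[OF Suc.IH] by simp
  ultimately show ?case
    using finite_subset by blast
qed simp

lemma bounded_tree_binary:
  "binary_node t \<Longrightarrow> \<forall>(p, l) \<in> set (leaf_paths t). length p < d \<and> set (l # p) \<subseteq> {..N}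
    \<Longrightarrow> bounded_tree N d t"
proof (induction t arbitrary: d)
  case (Nd m cs)
  obtain p l where pl: "(p, l) \<in> set (leaf_paths (Nd m cs))"
    using leaf_paths_ne by (metis list.set_sel(1) surj_pair)
  then obtain d' where d: "d = Suc d'"
    using Nd.prems(2) by (metis (no_types, lifting) case_prodD gr0_implies_Suc less_nat_zero_code
        not_gr_zero)
  show ?case
  proof (cases "cs = []")
    case True
    then show ?thesis
      using Nd.prems(2) d by simp
  next
    case False
    then have "m \<le> N"
      using pl Nd.prems(2) by (fastforce simp: leaf_paths_node)
    moreover have "bounded_tree N d' c" if c: "c \<in> set cs" for c
    proof (rule Nd.IH[OF c])
      show "binary_node c"
        using Nd.prems(1) c by (simp add: list_all_iff)
      show "\<forall>(p, l) \<in> set (leaf_paths c). length p < d' \<and> set (l # p) \<subseteq> {..N}"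
        using Nd.prems(2) leaf_paths_child[OF c] d by fastforce
    qed
    ultimately show ?thesis
      using Nd.prems(1) d by simp
  qed
qed

lemma finite_binary_ttm_trees: "finite {F. is_ttm_tree N F \<and> binary_ttm F}"
proof (rule finite_subset)
  show "{F. is_ttm_tree N F \<and> binary_ttm F}
      \<subseteq> {F. set F \<subseteq> {t. bounded_tree N N t} \<and> length F \<le> 2}"
  proof
    fix F assume "F \<in> {F. is_ttm_tree N F \<and> binary_ttm F}"
    then have F: "uniform_paths {1..N} F" "length F \<le> 2" "list_all binary_node F"
      by (simp_all add: is_ttm_tree_iff binary_ttm_def)
    have "bounded_tree N N t" if t: "t \<in> set F" for t
    proof (rule bounded_tree_binary)
      show "binary_node t"
        using F(3) t by (simp add: list_all_iff)
      have "length p < N \<and> set (l # p) \<subseteq> {..N}" if "(p, l) \<in> set (leaf_paths t)" for p l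
      proof -
        have "distinct (l # p)" "set (l # p) = {1..N}"
          using uniform_paths_root[OF F(1) t] that by (auto simp: uniform_paths_def)
        then show ?thesis
          using distinct_card[of "l # p"] by auto
      qed
      then show "\<forall>(p, l) \<in> set (leaf_paths t). length p < N \<and> set (l # p) \<subseteq> {..N}"
        by blast
    qed
    then show "F \<in> {F. set F \<subseteq> {t. bounded_tree N N t} \<and> length F \<le> 2}"
      using F(2) by auto
  qed
  show "finite {F. set F \<subseteq> {t. bounded_tree N N t} \<and> length F \<le> 2}"
    by (rule finite_lists_length_le[OF finite_bounded_trees])
qed

lemma binarize_ttm:
  assumes "is_ttm_tree N F" "\<forall>n \<in> {1..N}. K n \<le> L n"
  shows "\<exists>F'. is_ttm_tree N F' \<and> binary_ttm F' \<and> ttm_cost N K L F' \<le> ttm_cost N K L F"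
proof -
  have u: "uniform_paths {1..N} F" and labels: "mset (leaf_labels F) = mset [1..<N+1]"
    using assms(1) by (simp_all add: is_ttm_tree_iff)
  then have "distinct (leaf_labels F)"
    using mset_eq_imp_distinct_iff[OF labels] by simp
  then obtain F' where "length F' \<le> 2" "list_all binary_node F'" "improves K L {1..N} F' F"
    using binarize_forest[OF u _ assms(2)] by blast
  moreover have "0 \<le> (\<Prod>j\<in>{1..N}. real (L j))"
    by (simp add: prod_nonneg)
  ultimately show ?thesis
    using labels
    by (intro exI[of _ F']) (simp add: improves_def is_ttm_tree_iff binary_ttm_def ttm_cost_def
        forest_cost_def)
qed

theorem lemma1:
  fixes N :: nat and K L :: "nat \<Rightarrow> nat"
  assumes "N \<ge> 1"
    and "\<And>n. n \<in> {1..N} \<Longrightarrow> 0 < K n"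
    and "\<And>n. n \<in> {1..N} \<Longrightarrow> 0 < L n"
    and "\<And>n. n \<in> {1..N} \<Longrightarrow> K n \<le> L n"
  shows "\<exists>ts. is_ttm_tree N ts \<and> binary_ttm ts \<and>
           (\<forall>ts'. is_ttm_tree N ts' \<longrightarrow> ttm_cost N K L ts \<le> ttm_cost N K L ts')"
proof -
  let ?S = "{F. is_ttm_tree N F \<and> binary_ttm F}" and ?cost = "ttm_cost N K L"
  have KL: "\<forall>n \<in> {1..N}. K n \<le> L n"
    using assms(4) by blast
  have "?S \<noteq> {}"
    using ttm_tree_exists binarize_ttm[OF _ KL] by blast
  note min = arg_min_if_finite(1)[OF finite_binary_ttm_trees this, where f = ?cost]
    arg_min_least[OF finite_binary_ttm_trees this, where f = ?cost]
  have "?cost (arg_min_on ?cost ?S) \<le> ?cost F" if F: "is_ttm_tree N F" for F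
  proof -
    obtain F' where "F' \<in> ?S" "?cost F' \<le> ?cost F"
      using binarize_ttm[OF F KL] by blast
    then show ?thesis
      using min(2)[of F'] by linarith
  qed
  with min(1) show ?thesis
    by (intro exI[of _ "arg_min_on ?cost ?S"]) simp
qed

end
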